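(* Let $W=\{w_1,\dots,w_n\}$, $F=\{f_1,\dots,f_m\}$, let $\succcurlyeq$ be a preference profile and $\bm r=(r_1,\dots,r_{n+m})$ a ranking of $W\cup F$. If the tensors $\mathbf P_W,\mathbf P_F$ and the matrix $\bm R$ are defined from $\succcurlyeq$ and $\bm r$ as below, then $\mathrm{TSD}(\mathbf P_W,\mathbf P_F,\bm R)$ equals the matching matrix of the matching produced by serial dictatorship with ranking $\bm r$ on $\succcurlyeq$.
   Context: Preferences: each worker has a linear order $\succcurlyeq_{w_i}$ on $\overline F=F\cup\{\perp\}$, each firm a linear order $\succcurlyeq_{f_j}$ on $\overline W=W\cup\{\perp\}$ ($\perp$ = unmatched). For $x\in\overline F$, $\mathrm{ord}(x,\succcurlyeq_{w_i})=\#\{x'\in\overline F: x'\succcurlyeq_{w_i}x\}$ (position, $1$ = best); similarly for firms. Serial dictatorship (SD) with ranking $\bm r$: for $k=1,\dots,n+m$, if $r_k$ is not yet matched, $r_k$ is assigned its most preferred option among $\perp$ and the not-yet-matched agents of the other side (that agent, if any, becomes matched with $r_k$). The matching matrix $\bm M\in\{0,1\}^{(n+1)\times(m+1)}$ of a matching has $M_{ij}=1$ iff $w_i$ is matched with $f_j$ ($i\le n,j\le m$), $M_{i,m+1}=1$ iff $w_i$ is unmatched, $M_{n+1,j}=1$ iff $f_j$ is unmatched, $M_{n+1,m+1}=0$, all other entries $0$. Inputs: $\mathbf P_W=[\bm P_{w_1},\dots,\bm P_{w_n}]\in\{0,1\}^{n\times(m+1)\times(m+1)}$ with $(\bm P_{w_i})_{j,k}=1$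 iff ($j\le m$ and $\mathrm{ord}(f_j,\succcurlyeq_{w_i})=k$) or ($j=m+1$ and $\mathrm{ord}(\perp,\succcurlyeq_{w_i})=k$); $\mathbf P_F=[\bm P_{f_1},\dots,\bm P_{f_m}]\in\{0,1\}^{m\times(n+1)\times(n+1)}$ defined analogously with rows indexed by $w_1,\dots,w_n,\perp$; $\bm R\in\{0,1\}^{(n+m)\times(n+m)}$ with $R_{i,k}=1$ iff ($i\le n$ and $r_k=w_i$) or ($i>n$ and $r_k=f_{i-n}$). Subroutine FindCounterpart$(\bm P)$ for $\bm P\in\mathbb R^{p\times q}$: let $c_j=\sum_i P_{ij}$, replace $c$ by its cumulative sum $(\sum_{l\le j}c_l)_j$, apply elementwise $\mathrm{tw}(x)=0$ if $x\le0$, $x$ if $0<x\le1$, $2-x$ if $1<x\le2$, $0$ if $x>2$, and return the column vector $\bm P\bm c^\top\in\mathbb R^{p}$. Masks: for $k\in[n+m]$, $\bm U_W^{(k)}\in\mathbb R^{(m+1)\times(m+1)}$ is $\sum_{r=n+1}^{n+m}R_{r,k}\bm E^{(m+1)}_{r-n}$ and $\bm U_F^{(k)}\in\mathbb R^{(n+1)\times(n+1)}$ is $\sum_{r=1}^nR_{r,k}\bm E^{(n+1)}_r$, where $\bm E^{(s)}_t$ is the $s\times s$ matrix whose $t$-th row is all $-1$ and other entries $0$. TSD: set $\bm M=\bm O_{(n+1)\times(m+1)}$. For $k=1,\dots,n+m$: (1) $\bm d_w=(R_{1,k},\dots,R_{n,k})$, $\bm d_f=(R_{n+1,k},\dots,R_{n+m,k})$;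 (2) $\bm P_w=\sum_i(\bm d_w)_i\bm P_{w_i}$, $\bm P_f=\sum_j(\bm d_f)_j\bm P_{f_j}$ (current tensors); (3) $\bm c_w=$FindCounterpart$(\bm P_w)\in\mathbb R^{m+1}$, $\bm c_f=$FindCounterpart$(\bm P_f)\in\mathbb R^{n+1}$ (as row vectors); (4) $\bm M_w=[\bm d_w\|0]^\top\bm c_w$, $\bm M_f=[\bm d_f\|0]^\top\bm c_f$; (5) $\bm M\leftarrow\bm M+\bm M_w+\bm M_f^\top$; (6) $\bm V_W\in\mathbb R^{(m+1)\times(m+1)}$ has $t$-th row equal to $-(\bm c_w)_t$ times the all-ones row for $t\le m$ and zero row $m+1$; $\bm V_F\in\mathbb R^{(n+1)\times(n+1)}$ analogously from $\bm c_f$; (7) add $\bm U_W^{(k)}+\bm V_W$ to every $\bm P_{w_i}$ and $\bm U_F^{(k)}+\bm V_F$ to every $\bm P_{f_j}$; (8) replace each $\bm P_{w_i}$ by $(1-(\bm c_f)_i)\,\mathrm{ReLU}(\bm P_{w_i})$ and each $\bm P_{f_j}$ by $(1-(\bm c_w)_j)\,\mathrm{ReLU}(\bm P_{f_j})$, with $\mathrm{ReLU}$ elementwise $\max\{x,0\}$. Output $\bm M$. *)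

theory Defs
  imports Main Complex_Main
begin

(* Conventions (1-based indices):
   workers w_1..w_n are indices 1..n; firms f_1..f_m are indices 1..m.
   A worker's preference is a linear order on {1..m+1}, where m+1 stands for \<bottom>;
   a firm's preference is a linear order on {1..n+1}, where n+1 stands for \<bottom>.
   (x,y) \<in> r means x \<succcurlyeq> y.
   Agents of W \<union> F are encoded as 1..n+m: a \<le> n is w_a, a > n is f_(a-n)
   (exactly the row indexing of R). A ranking is a bijection rk of {1..n+m}, r_k = rk k.
   Matrices/tensors are real-valued functions on (1-based) nat indices. *)

definition ord_pos :: "nat set \<Rightarrow> nat rel \<Rightarrow> nat \<Rightarrow> nat" where
  "ord_pos A r x = card {x' \<in> A. (x', x) \<in> r}"

definition best :: "nat rel \<Rightarrow> nat set \<Rightarrow> nat" where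
  "best r S = (THE x. x \<in> S \<and> (\<forall>y\<in>S. (x, y) \<in> r))"

(* state: (set of agents already matched -- including those assigned \<bottom> --,
           set of matched pairs (i,j) meaning w_i matched with f_j) *)
definition sd_step :: "nat \<Rightarrow> nat \<Rightarrow> (nat \<Rightarrow> nat rel) \<Rightarrow> (nat \<Rightarrow> nat rel) \<Rightarrow> nat \<Rightarrow>
    nat set \<times> (nat \<times> nat) set \<Rightarrow> nat set \<times> (nat \<times> nat) set" where
  "sd_step n m prefW prefF a st =
     (let (D, Pairs) = st in
      if a \<in> D then (D, Pairs)
      else if a \<le> n then
        (let b = best (prefW a) ({m+1} \<union> {j \<in> {1..m}. n + j \<notin> D}) in
         if b = m + 1 then (D \<union> {a}, Pairs)
         else (D \<union> {a, n + b}, Pairs \<union> {(a, b)}))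
      else
        (let j = a - n; b = best (prefF j) ({n+1} \<union> {i \<in> {1..n}. i \<notin> D}) in
         if b = n + 1 then (D \<union> {a}, Pairs)
         else (D \<union> {a, b}, Pairs \<union> {(b, j)})))"

primrec sd_run :: "nat \<Rightarrow> nat \<Rightarrow> (nat \<Rightarrow> nat rel) \<Rightarrow> (nat \<Rightarrow> nat rel) \<Rightarrow> (nat \<Rightarrow> nat) \<Rightarrow> nat \<Rightarrow>
    nat set \<times> (nat \<times> nat) set" where
  "sd_run n m prefW prefF rk 0 = ({}, {})"
| "sd_run n m prefW prefF rk (Suc k) = sd_step n m prefW prefF (rk (Suc k)) (sd_run n m prefW prefF rk k)"

definition SD :: "nat \<Rightarrow> nat \<Rightarrow> (nat \<Rightarrow> nat rel) \<Rightarrow> (nat \<Rightarrow> nat rel) \<Rightarrow> (nat \<Rightarrow> nat) \<Rightarrow> (nat \<times> nat) set" where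
  "SD n m prefW prefF rk = snd (sd_run n m prefW prefF rk (n + m))"

definition matching_matrix :: "nat \<Rightarrow> nat \<Rightarrow> (nat \<times> nat) set \<Rightarrow> nat \<Rightarrow> nat \<Rightarrow> real" where
  "matching_matrix n m Pairs i j =
     (if 1 \<le> i \<and> i \<le> n \<and> 1 \<le> j \<and> j \<le> m then (if (i, j) \<in> Pairs then 1 else 0)
      else if 1 \<le> i \<and> i \<le> n \<and> j = m + 1 then (if (\<forall>j'. (i, j') \<notin> Pairs) then 1 else 0)
      else if i = n + 1 \<and> 1 \<le> j \<and> j \<le> m then (if (\<forall>i'. (i', j) \<notin> Pairs) then 1 else 0)
      else 0)"

definition PW_tensor :: "nat \<Rightarrow> (nat \<Rightarrow> nat rel) \<Rightarrow> nat \<Rightarrow> nat \<Rightarrow> nat \<Rightarrow> real" where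
  "PW_tensor m prefW i j k = (if ord_pos {1..m+1} (prefW i) j = k then 1 else 0)"

definition PF_tensor :: "nat \<Rightarrow> (nat \<Rightarrow> nat rel) \<Rightarrow> nat \<Rightarrow> nat \<Rightarrow> nat \<Rightarrow> real" where
  "PF_tensor n prefF j i k = (if ord_pos {1..n+1} (prefF j) i = k then 1 else 0)"

definition R_matrix :: "(nat \<Rightarrow> nat) \<Rightarrow> nat \<Rightarrow> nat \<Rightarrow> real" where
  "R_matrix rk i k = (if rk k = i then 1 else 0)"

definition tw :: "real \<Rightarrow> real" where
  "tw x = (if x \<le> 0 then 0 else if x \<le> 1 then x else if x \<le> 2 then 2 - x else 0)"

definition find_counterpart :: "nat \<Rightarrow> nat \<Rightarrow> (nat \<Rightarrow> nat \<Rightarrow> real) \<Rightarrow> nat \<Rightarrow> real" where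
  "find_counterpart p q P =
     (let c = (\<lambda>j. \<Sum>i = 1..p. P i j);
          cs = (\<lambda>j. \<Sum>l = 1..j. c l);
          c' = (\<lambda>j. tw (cs j))
      in (\<lambda>i. \<Sum>j = 1..q. P i j * c' j))"

definition E_mat :: "nat \<Rightarrow> nat \<Rightarrow> nat \<Rightarrow> real" where
  "E_mat t a b = (if a = t then -1 else 0)"

definition U_W :: "nat \<Rightarrow> nat \<Rightarrow> (nat \<Rightarrow> nat \<Rightarrow> real) \<Rightarrow> nat \<Rightarrow> nat \<Rightarrow> nat \<Rightarrow> real" where
  "U_W n m R k = (\<lambda>a b. \<Sum>r = n+1..n+m. R r k * E_mat (r - n) a b)"

definition U_F :: "nat \<Rightarrow> (nat \<Rightarrow> nat \<Rightarrow> real) \<Rightarrow> nat \<Rightarrow> nat \<Rightarrow> nat \<Rightarrow> real" where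
  "U_F n R k = (\<lambda>a b. \<Sum>r = 1..n. R r k * E_mat r a b)"

type_synonym tsd_state =
  "(nat \<Rightarrow> nat \<Rightarrow> real) \<times> (nat \<Rightarrow> nat \<Rightarrow> nat \<Rightarrow> real) \<times> (nat \<Rightarrow> nat \<Rightarrow> nat \<Rightarrow> real)"

definition tsd_step :: "nat \<Rightarrow> nat \<Rightarrow> (nat \<Rightarrow> nat \<Rightarrow> real) \<Rightarrow> nat \<Rightarrow> tsd_state \<Rightarrow> tsd_state" where
  "tsd_step n m R k st =
     (let (M, PWs, PFs) = st;
          dw = (\<lambda>i. R i k);
          df = (\<lambda>j. R (n + j) k);
          Pw = (\<lambda>a b. \<Sum>i = 1..n. dw i * PWs i a b);
          Pf = (\<lambda>a b. \<Sum>j = 1..m. df j * PFs j a b);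
          cw = find_counterpart (m+1) (m+1) Pw;
          cf = find_counterpart (n+1) (n+1) Pf;
          Mw = (\<lambda>a b. (if a \<le> n then dw a else 0) * cw b);
          Mf = (\<lambda>a b. (if a \<le> m then df a else 0) * cf b);
          M' = (\<lambda>a b. M a b + Mw a b + Mf b a);
          VW = (\<lambda>t s. if t \<le> m then - cw t else 0);
          VF = (\<lambda>t s. if t \<le> n then - cf t else 0);
          UW = U_W n m R k;
          UF = U_F n R k;
          PWs' = (\<lambda>i a b. (1 - cf i) * max (PWs i a b + UW a b + VW a b) 0);
          PFs' = (\<lambda>j a b. (1 - cw j) * max (PFs j a b + UF a b + VF a b) 0)
      in (M', PWs', PFs'))"

primrec tsd_run :: "nat \<Rightarrow> nat \<Rightarrow> (nat \<Rightarrow> nat \<Rightarrow> nat \<Rightarrow> real) \<Rightarrow> (nat \<Rightarrow> nat \<Rightarrow> nat \<Rightarrow> real)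
    \<Rightarrow> (nat \<Rightarrow> nat \<Rightarrow> real) \<Rightarrow> nat \<Rightarrow> tsd_state" where
  "tsd_run n m PW PF R 0 = ((\<lambda>a b. 0), PW, PF)"
| "tsd_run n m PW PF R (Suc k) = tsd_step n m R (Suc k) (tsd_run n m PW PF R k)"

definition TSD :: "nat \<Rightarrow> nat \<Rightarrow> (nat \<Rightarrow> nat \<Rightarrow> nat \<Rightarrow> real) \<Rightarrow> (nat \<Rightarrow> nat \<Rightarrow> nat \<Rightarrow> real)
    \<Rightarrow> (nat \<Rightarrow> nat \<Rightarrow> real) \<Rightarrow> nat \<Rightarrow> nat \<Rightarrow> real" where
  "TSD n m PW PF R = fst (tsd_run n m PW PF R (n + m))"

end

theory Submission
  imports Defs
begin

(* TSD is compared with serial dictatorship round by round. After k rounds, M is the matching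
   matrix of the partial SD matching, with a 1 in the unmatched column or row only for agents
   already decided, and every agent whose turn has not yet come still holds its preference
   permutation matrix with the rows of all decided counterparts erased (the zero matrix if it
   is decided itself). For an undecided dictator the cumulative column sum at the rank of an
   available option therefore counts the available options it likes at least as much, so tw
   maps it to 1 for the favourite available option and to 0 for all others: FindCounterpart
   returns the indicator of exactly the SD choice. The masks U and V and the factors 1 - c then
   erase precisely the rows and matrices of the agents matched in this round. *)

lemma linear_order_on_has_best:
  assumes lo: "linear_order_on A r" and "finite S" "S \<noteq> {}" "S \<subseteq> A"
  shows "\<exists>x\<in>S. \<forall>y\<in>S. (x, y) \<in> r"
  using assms(2-4)
proof (induction S rule: finite_ne_induct)
  case (singleton x)
  then show ?case
    using lo by (auto simp: linear_order_on_def partial_order_on_def preorder_on_def refl_on_def)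
next
  case (insert x F)
  then obtain z where z: "z \<in> F" "\<forall>y\<in>F. (z, y) \<in> r" by auto
  have "(x, z) \<in> r \<or> (z, x) \<in> r"
    using lo insert.prems z(1) unfolding linear_order_on_def total_on_def
    by (cases "x = z") (auto simp: partial_order_on_def preorder_on_def refl_on_def)
  then show ?case
    using z lo insert.prems
    by (auto simp: linear_order_on_def partial_order_on_def preorder_on_def refl_on_def dest: transD)
qed

lemma best_linear_order_on:
  assumes lo: "linear_order_on A r" and "finite S" "S \<noteq> {}" "S \<subseteq> A"
  shows "best r S \<in> S" and "y \<in> S \<Longrightarrow> (best r S, y) \<in> r"
proof -
  obtain x where x: "x \<in> S" "\<forall>y\<in>S. (x, y) \<in> r"
    using linear_order_on_has_best[OF assms] by blast
  have "antisym r" using lo by (simp add: linear_order_on_def partial_order_on_def)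
  then have "best r S = x"
    unfolding best_def using x by (blast dest: antisymD)
  then show "best r S \<in> S" and "y \<in> S \<Longrightarrow> (best r S, y) \<in> r" using x by auto
qed

lemma ord_pos_mono:
  assumes "linear_order_on A r" "finite A" "(x, y) \<in> r"
  shows "ord_pos A r x \<le> ord_pos A r y"
  unfolding ord_pos_def using assms
  by (intro card_mono)
     (auto simp: linear_order_on_def partial_order_on_def preorder_on_def dest: transD)

lemma ord_pos_range:
  assumes lo: "linear_order_on A r" and "finite A" "x \<in> A"
  shows "ord_pos A r x \<in> {1..card A}"
proof -
  have "x \<in> {x' \<in> A. (x', x) \<in> r}"
    using lo \<open>x \<in> A\<close>
    by (auto simp: linear_order_on_def partial_order_on_def preorder_on_def refl_on_def)
  then show ?thesis
    unfolding ord_pos_def using \<open>finite A\<close>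
    by (auto simp: Suc_le_eq card_gt_0_iff intro: card_mono)
qed

lemma inj_on_ord_pos:
  assumes lo: "linear_order_on A r" and fin: "finite A"
  shows "inj_on (ord_pos A r) A"
proof -
  have eq: "u = v" if "u \<in> A" "v \<in> A" "(u, v) \<in> r" "ord_pos A r u = ord_pos A r v" for u v
  proof -
    have "{x' \<in> A. (x', u) \<in> r} \<subseteq> {x' \<in> A. (x', v) \<in> r}"
      using lo that
      by (auto simp: linear_order_on_def partial_order_on_def preorder_on_def dest: transD)
    then have "{x' \<in> A. (x', u) \<in> r} = {x' \<in> A. (x', v) \<in> r}"
      using that fin by (intro card_subset_eq) (auto simp: ord_pos_def)
    then have "(v, u) \<in> r"
      using lo that
      by (auto simp: linear_order_on_def partial_order_on_def preorder_on_def refl_on_def)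
    then show "u = v"
      using lo that by (auto simp: linear_order_on_def partial_order_on_def dest: antisymD)
  qed
  show ?thesis
  proof (rule inj_onI)
    fix x y assume "x \<in> A" "y \<in> A" "ord_pos A r x = ord_pos A r y"
    moreover have "x = y \<or> (x, y) \<in> r \<or> (y, x) \<in> r"
      using lo \<open>x \<in> A\<close> \<open>y \<in> A\<close> by (auto simp: linear_order_on_def total_on_def)
    ultimately show "x = y" using eq by metis
  qed
qed

lemma find_counterpart_zero_row:
  assumes "\<And>y. y \<in> {1..q} \<Longrightarrow> P x y = 0"
  shows "find_counterpart p q P x = 0"
  using assms by (simp add: find_counterpart_def)

lemma find_counterpart_partial_permutation:
  fixes P :: "nat \<Rightarrow> nat \<Rightarrow> real"
  assumes S: "S \<subseteq> {1..p}" and inj: "inj_on pos S" and pos: "pos ` S \<subseteq> {1..q}"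
    and s: "s \<in> S" and s_min: "\<And>x. x \<in> S \<Longrightarrow> pos s \<le> pos x"
    and P: "\<And>x y. x \<in> {1..p} \<Longrightarrow> y \<in> {1..q} \<Longrightarrow>
              P x y = (if x \<in> S \<and> pos x = y then 1 else 0)"
    and x: "x \<in> {1..p}"
  shows "find_counterpart p q P x = (if x = s then 1 else 0)"
proof -
  have finS: "finite S" using S finite_subset by blast
  have column_count: "(\<Sum>l = 1..y. \<Sum>i = 1..p. P i l) = real (card {i \<in> S. pos i \<le> y})"
    if "y \<le> q" for y
  proof -
    have "(\<Sum>l = 1..y. \<Sum>i = 1..p. P i l) =
        (\<Sum>i = 1..p. \<Sum>l = 1..y. if i \<in> S \<and> pos i = l then 1 else 0)"
      using P that by (subst sum.swap) (auto intro!: sum.cong)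
    also have "\<dots> = (\<Sum>i = 1..p. if i \<in> S \<and> pos i \<le> y then 1 else 0)"
      using pos by (intro sum.cong refl) (auto simp: sum.delta' image_subset_iff)
    also have "\<dots> = real (card {i \<in> S. pos i \<le> y})"
    proof -
      have "{1..p} \<inter> {i. i \<in> S \<and> pos i \<le> y} = {i \<in> S. pos i \<le> y}" using S by auto
      then show ?thesis by (simp add: sum.If_cases)
    qed
    finally show ?thesis .
  qed
  show ?thesis
  proof (cases "x \<in> S")
    case False
    then show ?thesis using P x s by (auto simp: find_counterpart_def)
  next
    case True
    have "pos x \<in> {1..q}" using pos True by auto
    have "find_counterpart p q P x =
        (\<Sum>j = 1..q. P x j * tw (\<Sum>l = 1..j. \<Sum>i = 1..p. P i l))"
      by (simp add: find_counterpart_def)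
    also have "\<dots> =
        (\<Sum>j = 1..q. if j = pos x then tw (real (card {i \<in> S. pos i \<le> j})) else 0)"
      using P x True column_count by (intro sum.cong) auto
    also have "\<dots> = tw (real (card {i \<in> S. pos i \<le> pos x}))"
      using \<open>pos x \<in> {1..q}\<close> by simp
    moreover have "{i \<in> S. pos i \<le> pos s} = {s}"
      using s s_min inj by (auto dest: inj_onD intro: le_antisym)
    moreover have "card {i \<in> S. pos i \<le> pos x} \<ge> 2" if "x \<noteq> s"
    proof -
      have "{s, x} \<subseteq> {i \<in> S. pos i \<le> pos x}" using s s_min True by auto
      then show ?thesis
        using that finS card_mono[of "{i \<in> S. pos i \<le> pos x}" "{s, x}"] by auto
    qed
    ultimately show ?thesis
      by (cases "x = s") (simp_all add: tw_def)
  qed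
qed

lemma find_counterpart_best:
  assumes lo: "linear_order_on {1..N} r" and S: "S \<subseteq> {1..N}" "S \<noteq> {}"
    and P: "\<And>x y. x \<in> {1..N} \<Longrightarrow> y \<in> {1..N} \<Longrightarrow>
              P x y = (if x \<in> S \<and> ord_pos {1..N} r x = y then 1 else 0)"
    and x: "x \<in> {1..N}"
  shows "find_counterpart N N P x = (if x = best r S then 1 else 0)"
proof (rule find_counterpart_partial_permutation[OF S(1) _ _ _ _ P x])
  have fin: "finite S" using S(1) finite_subset by blast
  show "inj_on (ord_pos {1..N} r) S" using inj_on_ord_pos[OF lo] S(1) inj_on_subset by blast
  show "ord_pos {1..N} r ` S \<subseteq> {1..N}" using ord_pos_range[OF lo] S(1) by fastforce
  show "best r S \<in> S" using best_linear_order_on(1)[OF lo fin S(2,1)] .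
  show "ord_pos {1..N} r (best r S) \<le> ord_pos {1..N} r y" if "y \<in> S" for y
    using ord_pos_mono[OF lo] best_linear_order_on(2)[OF lo fin S(2,1) that] by simp
qed

type_synonym real_matrix = "nat \<Rightarrow> nat \<Rightarrow> real"
type_synonym real_tensor = "nat \<Rightarrow> nat \<Rightarrow> nat \<Rightarrow> real"

definition tsd_cw :: "nat \<Rightarrow> nat \<Rightarrow> real_matrix \<Rightarrow> nat \<Rightarrow> real_tensor \<Rightarrow> nat \<Rightarrow> real" where
  "tsd_cw n m R k PWs = find_counterpart (m+1) (m+1) (\<lambda>a b. \<Sum>i = 1..n. R i k * PWs i a b)"

definition tsd_cf :: "nat \<Rightarrow> nat \<Rightarrow> real_matrix \<Rightarrow> nat \<Rightarrow> real_tensor \<Rightarrow> nat \<Rightarrow> real" where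
  "tsd_cf n m R k PFs = find_counterpart (n+1) (n+1) (\<lambda>a b. \<Sum>j = 1..m. R (n + j) k * PFs j a b)"

lemma tsd_step_eq:
  "tsd_step n m R k (M, PWs, PFs) =
    ((\<lambda>a b. M a b + (if a \<le> n then R a k else 0) * tsd_cw n m R k PWs b
                   + (if b \<le> m then R (n + b) k else 0) * tsd_cf n m R k PFs a),
     (\<lambda>i a b. (1 - tsd_cf n m R k PFs i) *
        max (PWs i a b + U_W n m R k a b + (if a \<le> m then - tsd_cw n m R k PWs a else 0)) 0),
     (\<lambda>j a b. (1 - tsd_cw n m R k PWs j) *
        max (PFs j a b + U_F n R k a b + (if a \<le> n then - tsd_cf n m R k PFs a else 0)) 0))"
  unfolding tsd_step_def Let_def tsd_cw_def tsd_cf_def by simp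

lemma R_matrix_sum_workers:
  "(\<Sum>i = 1..n. R_matrix rk i k * X i) = (if rk k \<in> {1..n} then X (rk k) else 0)"
proof -
  have "(\<Sum>i = 1..n. R_matrix rk i k * X i) = (\<Sum>i = 1..n. if rk k = i then X i else 0)"
    unfolding R_matrix_def by (intro sum.cong) auto
  then show ?thesis by simp
qed

lemma R_matrix_sum_firms:
  "(\<Sum>j = 1..m. R_matrix rk (n + j) k * X j) =
     (if rk k \<in> {n+1..n+m} then X (rk k - n) else 0)"
proof -
  have "(\<Sum>j = 1..m. R_matrix rk (n + j) k * X j) =
      (\<Sum>j = 1..m. if j = rk k - n \<and> n < rk k then X j else 0)"
    unfolding R_matrix_def by (intro sum.cong) auto
  then show ?thesis by (cases "n < rk k") (auto simp: sum.delta')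
qed

lemma U_W_R_matrix:
  "U_W n m (R_matrix rk) k a b = (if rk k \<in> {n+1..n+m} \<and> a = rk k - n then -1 else 0)"
proof -
  have "U_W n m (R_matrix rk) k a b =
      (\<Sum>r = n+1..n+m. if r = rk k then E_mat (r - n) a b else 0)"
    unfolding U_W_def R_matrix_def by (intro sum.cong) auto
  then show ?thesis by (simp add: E_mat_def)
qed

lemma U_F_R_matrix:
  "U_F n (R_matrix rk) k a b = (if rk k \<in> {1..n} \<and> a = rk k then -1 else 0)"
proof -
  have "U_F n (R_matrix rk) k a b = (\<Sum>r = 1..n. if r = rk k then E_mat r a b else 0)"
    unfolding U_F_def R_matrix_def by (intro sum.cong) auto
  then show ?thesis by (simp add: E_mat_def)
qed

lemma tsd_cw_R_matrix:
  "tsd_cw n m (R_matrix rk) k PWs =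
     find_counterpart (m+1) (m+1) (\<lambda>a b. if rk k \<in> {1..n} then PWs (rk k) a b else 0)"
  unfolding tsd_cw_def R_matrix_sum_workers ..

lemma tsd_cf_R_matrix:
  "tsd_cf n m (R_matrix rk) k PFs =
     find_counterpart (n+1) (n+1) (\<lambda>a b. if rk k \<in> {n+1..n+m} then PFs (rk k - n) a b else 0)"
  unfolding tsd_cf_def R_matrix_sum_firms ..

definition partial_matching_matrix :: "nat \<Rightarrow> nat \<Rightarrow> nat set \<Rightarrow> (nat \<times> nat) set \<Rightarrow> real_matrix" where
  "partial_matching_matrix n m D Q i j =
    (if i \<le> n \<and> j \<le> m then (if (i, j) \<in> Q then 1 else 0)
     else if i \<le> n \<and> j = m + 1 then (if i \<in> D \<and> (\<forall>j'. (i, j') \<notin> Q) then 1 else 0)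
     else if i = n + 1 \<and> j \<le> m then (if n + j \<in> D \<and> (\<forall>i'. (i', j) \<notin> Q) then 1 else 0)
     else 0)"

(* K is the set of agents whose turn has already come; their matrices are no longer needed. *)
fun tsd_simulates_sd :: "nat \<Rightarrow> nat \<Rightarrow> (nat \<Rightarrow> nat rel) \<Rightarrow> (nat \<Rightarrow> nat rel) \<Rightarrow> nat set \<Rightarrow>
    nat set \<times> (nat \<times> nat) set \<Rightarrow> tsd_state \<Rightarrow> bool" where
  "tsd_simulates_sd n m prefW prefF K (D, Q) (M, PWs, PFs) \<longleftrightarrow>
     D \<subseteq> {1..n+m} \<and> K \<subseteq> D \<and> Q \<subseteq> {1..n} \<times> {1..m} \<and>
     (\<forall>(i, j)\<in>Q. i \<in> D \<and> n + j \<in> D) \<and>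
     (\<forall>i\<in>{1..n}. i \<notin> K \<longrightarrow> (\<forall>x\<in>{1..m+1}. \<forall>y\<in>{1..m+1}.
        PWs i x y = (if i \<in> D then 0
                     else if x = m + 1 \<or> n + x \<notin> D then PW_tensor m prefW i x y else 0))) \<and>
     (\<forall>j\<in>{1..m}. n + j \<notin> K \<longrightarrow> (\<forall>x\<in>{1..n+1}. \<forall>y\<in>{1..n+1}.
        PFs j x y = (if n + j \<in> D then 0
                     else if x = n + 1 \<or> x \<notin> D then PF_tensor n prefF j x y else 0))) \<and>
     (\<forall>i\<in>{1..n+1}. \<forall>j\<in>{1..m+1}. M i j = partial_matching_matrix n m D Q i j)"

lemma tsd_step_worker_dictator:
  assumes inv: "tsd_simulates_sd n m prefW prefF K (D, Q) (M, PWs, PFs)"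
    and lo: "linear_order_on {1..m+1} (prefW a)"
    and rk: "rk k = a" and a: "a \<in> {1..n}" "a \<notin> K" "a \<notin> D"
  shows "tsd_simulates_sd n m prefW prefF (insert a K) (sd_step n m prefW prefF a (D, Q))
           (tsd_step n m (R_matrix rk) k (M, PWs, PFs))"
proof -
  define S where "S = {m+1} \<union> {j \<in> {1..m}. n + j \<notin> D}"
  define b where "b = best (prefW a) S"
  have S: "S \<subseteq> {1..m+1}" "S \<noteq> {}" unfolding S_def by auto
  have b: "b \<in> S"
    unfolding b_def using best_linear_order_on(1)[OF lo _ S(2,1)] S(1) finite_subset by blast
  have cw: "tsd_cw n m (R_matrix rk) k PWs x = (if x = b then 1 else 0)" if "x \<in> {1..m+1}" for x
    unfolding tsd_cw_R_matrix b_def using rk a inv that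
    by (intro find_counterpart_best[OF lo S]) (auto simp: S_def PW_tensor_def)
  have cf: "tsd_cf n m (R_matrix rk) k PFs x = 0" for x
    unfolding tsd_cf_R_matrix using rk a by (auto intro: find_counterpart_zero_row)
  have sd: "sd_step n m prefW prefF a (D, Q) =
      (if b = m + 1 then (D \<union> {a}, Q) else (D \<union> {a, n + b}, Q \<union> {(a, b)}))"
    using a unfolding sd_step_def b_def S_def by (simp add: Let_def)
  show ?thesis
  proof (cases "b = m + 1")
    case True
    then have "sd_step n m prefW prefF a (D, Q) = (D \<union> {a}, Q)" by (simp add: sd)
    then show ?thesis
      unfolding tsd_step_eq using inv a b S True
      by (simp only: tsd_simulates_sd.simps)
        (intro conjI; auto simp: cw cf U_W_R_matrix U_F_R_matrix R_matrix_def rk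
          PW_tensor_def PF_tensor_def partial_matching_matrix_def S_def)
  next
    case False
    then have "sd_step n m prefW prefF a (D, Q) = (D \<union> {a, n + b}, Q \<union> {(a, b)})"
      by (simp add: sd)
    then show ?thesis
      unfolding tsd_step_eq using inv a b S False
      by (simp only: tsd_simulates_sd.simps)
        (intro conjI; auto simp: cw cf U_W_R_matrix U_F_R_matrix R_matrix_def rk
          PW_tensor_def PF_tensor_def partial_matching_matrix_def S_def)
  qed
qed

lemma tsd_step_firm_dictator:
  assumes inv: "tsd_simulates_sd n m prefW prefF K (D, Q) (M, PWs, PFs)"
    and lo: "linear_order_on {1..n+1} (prefF j)"
    and rk: "rk k = n + j" and j: "j \<in> {1..m}" "n + j \<notin> K" "n + j \<notin> D"
  shows "tsd_simulates_sd n m prefW prefF (insert (n + j) K)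
           (sd_step n m prefW prefF (n + j) (D, Q))
           (tsd_step n m (R_matrix rk) k (M, PWs, PFs))"
proof -
  define S where "S = {n+1} \<union> {i \<in> {1..n}. i \<notin> D}"
  define b where "b = best (prefF j) S"
  have S: "S \<subseteq> {1..n+1}" "S \<noteq> {}" unfolding S_def by auto
  have b: "b \<in> S"
    unfolding b_def using best_linear_order_on(1)[OF lo _ S(2,1)] S(1) finite_subset by blast
  have cf: "tsd_cf n m (R_matrix rk) k PFs x = (if x = b then 1 else 0)" if "x \<in> {1..n+1}" for x
    unfolding tsd_cf_R_matrix b_def using rk j inv that
    by (intro find_counterpart_best[OF lo S]) (auto simp: S_def PF_tensor_def)
  have cw: "tsd_cw n m (R_matrix rk) k PWs x = 0" for x
    unfolding tsd_cw_R_matrix using rk j by (auto intro: find_counterpart_zero_row)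
  have sd: "sd_step n m prefW prefF (n + j) (D, Q) =
      (if b = n + 1 then (D \<union> {n + j}, Q) else (D \<union> {n + j, b}, Q \<union> {(b, j)}))"
    using j unfolding sd_step_def b_def S_def by (simp add: Let_def)
  show ?thesis
  proof (cases "b = n + 1")
    case True
    then have "sd_step n m prefW prefF (n + j) (D, Q) = (D \<union> {n + j}, Q)" by (simp add: sd)
    then show ?thesis
      unfolding tsd_step_eq using inv j b S True
      by (simp only: tsd_simulates_sd.simps)
        (intro conjI; auto simp: cw cf U_W_R_matrix U_F_R_matrix R_matrix_def rk
          PW_tensor_def PF_tensor_def partial_matching_matrix_def S_def)
  next
    case False
    then have "sd_step n m prefW prefF (n + j) (D, Q) = (D \<union> {n + j, b}, Q \<union> {(b, j)})"
      by (simp add: sd)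
    then show ?thesis
      unfolding tsd_step_eq using inv j b S False
      by (simp only: tsd_simulates_sd.simps)
        (intro conjI; auto simp: cw cf U_W_R_matrix U_F_R_matrix R_matrix_def rk
          PW_tensor_def PF_tensor_def partial_matching_matrix_def S_def)
  qed
qed

lemma tsd_step_decided_dictator:
  assumes inv: "tsd_simulates_sd n m prefW prefF K (D, Q) (M, PWs, PFs)"
    and rk: "rk k = a" and a: "a \<in> {1..n+m}" "a \<notin> K" "a \<in> D"
  shows "tsd_simulates_sd n m prefW prefF (insert a K) (sd_step n m prefW prefF a (D, Q))
           (tsd_step n m (R_matrix rk) k (M, PWs, PFs))"
proof -
  have cw: "tsd_cw n m (R_matrix rk) k PWs x = 0" if "x \<in> {1..m+1}" for x
    unfolding tsd_cw_R_matrix using rk a inv that by (auto intro!: find_counterpart_zero_row)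
  have cf: "tsd_cf n m (R_matrix rk) k PFs x = 0" if "x \<in> {1..n+1}" for x
  proof -
    have "a \<le> n \<or> (a - n \<in> {1..m} \<and> n + (a - n) = a)" using a by auto
    then show ?thesis
      unfolding tsd_cf_R_matrix using rk a inv that by (auto intro!: find_counterpart_zero_row)
  qed
  have "sd_step n m prefW prefF a (D, Q) = (D, Q)" using a by (simp add: sd_step_def)
  then show ?thesis
    unfolding tsd_step_eq using inv a
    by (simp only: tsd_simulates_sd.simps)
      (intro conjI; auto simp: cw cf U_W_R_matrix U_F_R_matrix R_matrix_def rk
        PW_tensor_def PF_tensor_def partial_matching_matrix_def)
qed

lemma tsd_run_simulates_sd_run:
  assumes lw: "\<forall>i\<in>{1..n}. linear_order_on {1..m+1} (prefW i)"
    and lf: "\<forall>j\<in>{1..m}. linear_order_on {1..n+1} (prefF j)"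
    and rk: "bij_betw rk {1..n+m} {1..n+m}"
    and "k \<le> n + m"
  shows "tsd_simulates_sd n m prefW prefF (rk ` {1..k}) (sd_run n m prefW prefF rk k)
           (tsd_run n m (PW_tensor m prefW) (PF_tensor n prefF) (R_matrix rk) k)"
  using \<open>k \<le> n + m\<close>
proof (induction k)
  case 0
  show ?case by (simp add: partial_matching_matrix_def)
next
  case (Suc k)
  obtain D Q where sd: "sd_run n m prefW prefF rk k = (D, Q)" by fastforce
  obtain M PWs PFs
    where tsd: "tsd_run n m (PW_tensor m prefW) (PF_tensor n prefF) (R_matrix rk) k = (M, PWs, PFs)"
    by (metis prod_cases3)
  have inv: "tsd_simulates_sd n m prefW prefF (rk ` {1..k}) (D, Q) (M, PWs, PFs)"
    using Suc sd tsd by simp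
  define a where "a = rk (Suc k)"
  have "Suc k \<in> {1..n+m}" using Suc.prems by simp
  moreover have "{1..k} \<subseteq> {1..n+m}" using Suc.prems by simp
  ultimately have a: "a \<in> {1..n+m}" "a \<notin> rk ` {1..k}"
    using rk unfolding a_def bij_betw_def by (auto simp: inj_on_image_mem_iff[of rk "{1..n+m}"])
  have K: "rk ` {1..Suc k} = insert a (rk ` {1..k})"
    unfolding a_def by (simp add: atLeastAtMostSuc_conv)
  have "tsd_simulates_sd n m prefW prefF (insert a (rk ` {1..k})) (sd_step n m prefW prefF a (D, Q))
      (tsd_step n m (R_matrix rk) (Suc k) (M, PWs, PFs))"
  proof (cases "a \<in> D")
    case True
    with inv a show ?thesis by (intro tsd_step_decided_dictator) (auto simp: a_def)
  next
    case undecided: False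
    consider (worker) "a \<le> n" | (firm) j where "a = n + j" "j \<in> {1..m}"
    proof (cases "a \<le> n")
      case False
      with a show ?thesis by (intro that(2)[of "a - n"]) auto
    qed (rule that(1))
    then show ?thesis
    proof cases
      case worker
      with inv a undecided lw show ?thesis by (intro tsd_step_worker_dictator) (auto simp: a_def)
    next
      case (firm j)
      then have "rk (Suc k) = n + j" by (simp add: a_def)
      with inv a undecided lf firm show ?thesis
        unfolding firm(1) by (intro tsd_step_firm_dictator) auto
    qed
  qed
  then show ?case unfolding K by (simp add: sd tsd a_def)
qed

theorem proposition3:
  fixes n m :: nat
    and prefW prefF :: "nat \<Rightarrow> nat rel"
    and rk :: "nat \<Rightarrow> nat"
  assumes "\<forall>i\<in>{1..n}. linear_order_on {1..m+1} (prefW i)"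
    and "\<forall>j\<in>{1..m}. linear_order_on {1..n+1} (prefF j)"
    and "bij_betw rk {1..n+m} {1..n+m}"
  shows "\<forall>i\<in>{1..n+1}. \<forall>j\<in>{1..m+1}.
           TSD n m (PW_tensor m prefW) (PF_tensor n prefF) (R_matrix rk) i j
           = matching_matrix n m (SD n m prefW prefF rk) i j"
proof -
  obtain D Q where sd: "sd_run n m prefW prefF rk (n + m) = (D, Q)" by fastforce
  obtain M PWs PFs
    where tsd: "tsd_run n m (PW_tensor m prefW) (PF_tensor n prefF) (R_matrix rk) (n + m) = (M, PWs, PFs)"
    by (metis prod_cases3)
  have "rk ` {1..n+m} = {1..n+m}" using assms(3) by (simp add: bij_betw_def)
  then have "tsd_simulates_sd n m prefW prefF {1..n+m} (D, Q) (M, PWs, PFs)"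
    using tsd_run_simulates_sd_run[OF assms, of "n + m"] sd tsd by simp
  then have "D = {1..n+m}"
    and "\<forall>i\<in>{1..n+1}. \<forall>j\<in>{1..m+1}. M i j = partial_matching_matrix n m D Q i j"
    by auto
  then show ?thesis
    using sd tsd by (auto simp: TSD_def SD_def partial_matching_matrix_def matching_matrix_def)
qed

end
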